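(* Let $H\in(0,1)$, $W$ a fractional Brownian motion with Hurst parameter $H$, $b\in\{2,3,\dots\}$, $n\in\mathbb N$, and $0\le u\le v\le1$ with $ub^n,vb^n\in\mathbb Z$. Then for all real numbers $\mu_1,\dots,\mu_{b^{n+1}}$, $$\sum_{j=1}^{b^{n+1}}|\mu_j|\,\big|\mathbb E[(W(jb^{-n-1})-W((j-1)b^{-n-1}))(W(v)-W(u))]\big|\le\sum_{i=1}^{b^n}\Big(\max_{(i-1)b<j\le ib}|\mu_j|\Big)\big|\mathbb E[(W(ib^{-n})-W((i-1)b^{-n}))(W(v)-W(u))]\big|.$$ *)

theory Defs
  imports "HOL-Probability.Probability"
begin

definition fbm_cov :: "real \<Rightarrow> real \<Rightarrow> real \<Rightarrow> real" where
  "fbm_cov H s t = (\<bar>s\<bar> powr (2*H) + \<bar>t\<bar> powr (2*H) - \<bar>t - s\<bar> powr (2*H)) / 2"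

text \<open>W is a fractional Brownian motion on [0,\<infinity>) with Hurst parameter H on the
  probability space M: a centred Gaussian process (every finite linear combination of
  values is a centred normal variable, possibly degenerate) with covariance fbm_cov H.\<close>
definition is_fbm :: "'a measure \<Rightarrow> real \<Rightarrow> (real \<Rightarrow> 'a \<Rightarrow> real) \<Rightarrow> bool" where
  "is_fbm M H W \<longleftrightarrow>
     prob_space M \<and> 0 < H \<and> H < 1 \<and>
     (\<forall>t\<ge>0. W t \<in> borel_measurable M) \<and>
     (\<forall>s\<ge>0. \<forall>t\<ge>0. integrable M (\<lambda>\<omega>. W s \<omega> * W t \<omega>)) \<and>
     (\<forall>t\<ge>0. integrable M (W t) \<and> integral\<^sup>L M (W t) = 0) \<and>
     (\<forall>s\<ge>0. \<forall>t\<ge>0. integral\<^sup>L M (\<lambda>\<omega>. W s \<omega> * W t \<omega>) = fbm_cov H s t) \<and>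
     (\<forall>(ts::real list) (cs::real list).
        length ts = length cs \<and> (\<forall>t\<in>set ts. t \<ge> 0) \<longrightarrow>
        (let X = (\<lambda>\<omega>. \<Sum>i<length ts. cs ! i * W (ts ! i) \<omega>);
             \<sigma>2 = integral\<^sup>L M (\<lambda>\<omega>. (X \<omega>)\<^sup>2)
         in (\<sigma>2 = 0 \<and> (AE \<omega> in M. X \<omega> = 0)) \<or>
            (\<sigma>2 > 0 \<and> distributed M lborel X (normal_density 0 (sqrt \<sigma>2)))))"

end

theory Submission
  imports Defs
begin

(* Write phi t for the covariance of W t with the increment W v - W u, so that
   E[(W a - W b)(W v - W u)] = phi a - phi b. Up to a constant,
   phi t = (|u - t|^(2H) - |v - t|^(2H)) / 2, which is monotone on each of the pieces
   (-inf, u], [u, v] and [v, inf): on the outer pieces it is, up to sign, the function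
   x |-> (x + (v - u))^(2H) - x^(2H) of the distance x to the nearer endpoint, and this
   function is monotone by convexity (2H >= 1) or concavity (2H <= 1) of x^(2H).
   Because u and v are points of the grid b^-n Z, every cell of that grid lies in one
   piece, so the b fine increments of phi inside a cell share a sign and their absolute
   values add up to the absolute value of the coarse increment. Bounding each |mu j| by
   its block maximum gives the inequality. *)

lemma powr_increment_has_derivative:
  fixes p d x :: real
  assumes "0 < x" "0 \<le> d"
  shows "((\<lambda>x. (x + d) powr p - x powr p) has_real_derivative
           p * (x + d) powr (p - 1) - p * x powr (p - 1)) (at x)"
  using assms by (auto intro!: derivative_eq_intros)

lemma powr_increment_continuous_on:
  fixes p d :: real
  assumes "0 < p" "0 \<le> d"
  shows "continuous_on {0..} (\<lambda>x. (x + d) powr p - x powr p)"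
  using assms by (intro continuous_intros continuous_on_powr') auto

lemma powr_increment_mono:
  fixes p d :: real
  assumes "1 \<le> p" "0 \<le> d"
  shows "mono_on {0..} (\<lambda>x. (x + d) powr p - x powr p)"
proof (rule monotone_onI)
  fix x y :: real assume "x \<in> {0..}" "y \<in> {0..}" "x \<le> y"
  show "(x + d) powr p - x powr p \<le> (y + d) powr p - y powr p"
  proof (rule DERIV_nonneg_imp_increasing_open[where f = "\<lambda>x. (x + d) powr p - x powr p",
                                               OF \<open>x \<le> y\<close>])
    fix z assume "x < z" "z < y"
    with \<open>x \<in> {0..}\<close> assms
    show "\<exists>l. ((\<lambda>x. (x + d) powr p - x powr p) has_real_derivative l) (at z) \<and> 0 \<le> l"
      by (intro exI[of _ "p * (z + d) powr (p - 1) - p * z powr (p - 1)"] conjI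
            powr_increment_has_derivative)
         (auto intro!: mult_left_mono powr_mono2)
  next
    show "continuous_on {x..y} (\<lambda>x. (x + d) powr p - x powr p)"
      using powr_increment_continuous_on[of p d] assms \<open>x \<in> {0..}\<close>
      by (auto elim: continuous_on_subset)
  qed
qed

lemma powr_increment_antimono:
  fixes p d :: real
  assumes "0 < p" "p \<le> 1" "0 \<le> d"
  shows "antimono_on {0..} (\<lambda>x. (x + d) powr p - x powr p)"
proof (rule monotone_onI)
  fix x y :: real assume "x \<in> {0..}" "y \<in> {0..}" "x \<le> y"
  show "(y + d) powr p - y powr p \<le> (x + d) powr p - x powr p"
  proof (rule DERIV_nonpos_imp_decreasing_open[where f = "\<lambda>x. (x + d) powr p - x powr p",
                                               OF \<open>x \<le> y\<close>])
    fix z assume "x < z" "z < y"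
    with \<open>x \<in> {0..}\<close> assms
    show "\<exists>l. ((\<lambda>x. (x + d) powr p - x powr p) has_real_derivative l) (at z) \<and> l \<le> 0"
      by (intro exI[of _ "p * (z + d) powr (p - 1) - p * z powr (p - 1)"] conjI
            powr_increment_has_derivative)
         (auto intro!: mult_left_mono powr_mono2')
  next
    show "continuous_on {x..y} (\<lambda>x. (x + d) powr p - x powr p)"
      using powr_increment_continuous_on[of p d] assms \<open>x \<in> {0..}\<close>
      by (auto elim: continuous_on_subset)
  qed
qed

lemma powr_increment_monotone:
  fixes p d :: real
  assumes "0 < p" "0 \<le> d"
  shows "mono_on {0..} (\<lambda>x. (x + d) powr p - x powr p)
       \<or> antimono_on {0..} (\<lambda>x. (x + d) powr p - x powr p)"
  using powr_increment_mono[of p d] powr_increment_antimono[of p d] assms by linarith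

definition fbm_cov_increment :: "real \<Rightarrow> real \<Rightarrow> real \<Rightarrow> real \<Rightarrow> real" where
  "fbm_cov_increment H u v t = fbm_cov H t v - fbm_cov H t u"

lemma fbm_cov_increment_eq:
  "fbm_cov_increment H u v t =
     (\<bar>v\<bar> powr (2*H) - \<bar>u\<bar> powr (2*H) + \<bar>u - t\<bar> powr (2*H) - \<bar>v - t\<bar> powr (2*H)) / 2"
  unfolding fbm_cov_increment_def fbm_cov_def by (simp add: field_simps)

lemma integral_fbm_increments:
  assumes "is_fbm M H W" "0 \<le> a" "0 \<le> b" "0 \<le> u" "0 \<le> v"
  shows "(\<integral>\<omega>. (W a \<omega> - W b \<omega>) * (W v \<omega> - W u \<omega>) \<partial>M)
       = fbm_cov_increment H u v a - fbm_cov_increment H u v b"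
proof -
  have int: "\<And>s t. s \<ge> 0 \<Longrightarrow> t \<ge> 0 \<Longrightarrow> integrable M (\<lambda>\<omega>. W s \<omega> * W t \<omega>)"
    and cov: "\<And>s t. s \<ge> 0 \<Longrightarrow> t \<ge> 0 \<Longrightarrow> (\<integral>\<omega>. W s \<omega> * W t \<omega> \<partial>M) = fbm_cov H s t"
    using assms(1) unfolding is_fbm_def by auto
  have "(\<lambda>\<omega>. (W a \<omega> - W b \<omega>) * (W v \<omega> - W u \<omega>)) =
     (\<lambda>\<omega>. (W a \<omega> * W v \<omega> - W a \<omega> * W u \<omega>) - (W b \<omega> * W v \<omega> - W b \<omega> * W u \<omega>))"
    by (auto simp: algebra_simps)
  then show ?thesis
    using assms(2-) unfolding fbm_cov_increment_def
    by (simp add: int cov)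
qed

lemma fbm_cov_increment_monotone:
  assumes "0 < H" "u \<le> v" and off_uv: "t \<le> u \<or> (u \<le> s \<and> t \<le> v) \<or> v \<le> s"
  shows "mono_on {s..t} (fbm_cov_increment H u v) \<or> antimono_on {s..t} (fbm_cov_increment H u v)"
proof -
  define p where "p = 2 * H"
  define h where "h x = (x + (v - u)) powr p - x powr p" for x
  define c where "c = (\<bar>v\<bar> powr p - \<bar>u\<bar> powr p) / 2"
  have "0 < p" using assms(1) by (simp add: p_def)
  have h: "mono_on {0..} h \<or> antimono_on {0..} h"
    unfolding h_def using powr_increment_monotone[OF \<open>0 < p\<close>] assms(2) by simp
  consider "t \<le> u" | "u \<le> s" "t \<le> v" | "v \<le> s" using off_uv by blast
  then show ?thesis
  proof cases
    case 1
    have eq: "fbm_cov_increment H u v x = c - h (u - x) / 2" if "x \<le> u" for x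
      using that assms(2)
      by (simp add: fbm_cov_increment_eq c_def h_def p_def abs_of_nonneg field_simps)
    from h show ?thesis
      using 1 by (auto simp: eq monotone_on_def)
  next
    case 2
    have "fbm_cov_increment H u v x \<le> fbm_cov_increment H u v y"
      if "s \<le> x" "x \<le> y" "y \<le> t" for x y
      using that 2 \<open>0 < p\<close>
      by (auto simp: fbm_cov_increment_eq p_def[symmetric] abs_of_nonneg abs_of_nonpos
               intro!: diff_mono divide_right_mono powr_mono2)
    then show ?thesis by (auto intro!: monotone_onI)
  next
    case 3
    have eq: "fbm_cov_increment H u v x = c + h (x - v) / 2" if "v \<le> x" for x
      using that assms(2)
      by (simp add: fbm_cov_increment_eq c_def h_def p_def abs_of_nonpos field_simps)
    from h show ?thesis
      using 3 by (auto simp: eq monotone_on_def)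
  qed
qed

lemma sum_abs_diff_monotone_on:
  fixes f :: "nat \<Rightarrow> 'a::linordered_idom"
  assumes "a \<le> c" and "mono_on {a..c} f \<or> antimono_on {a..c} f"
  shows "(\<Sum>j\<in>{a<..c}. \<bar>f j - f (j - 1)\<bar>) = \<bar>f c - f a\<bar>"
proof -
  have telescope: "(\<Sum>j\<in>{a<..c}. f j - f (j - 1)) = f c - f a"
    using sum_telescope''[OF assms(1)] by (simp add: atLeastSucAtMost_greaterThanAtMost)
  from assms(2) show ?thesis
  proof
    assume mono: "mono_on {a..c} f"
    have "(\<Sum>j\<in>{a<..c}. \<bar>f j - f (j - 1)\<bar>) = (\<Sum>j\<in>{a<..c}. f j - f (j - 1))"
      by (intro sum.cong refl abs_of_nonneg) (auto intro!: monotone_onD[OF mono])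
    moreover have "f a \<le> f c"
      using assms(1) by (intro monotone_onD[OF mono]) auto
    ultimately show ?thesis
      using telescope by simp
  next
    assume antimono: "antimono_on {a..c} f"
    have "f j \<le> f (j - 1)" if "j \<in> {a<..c}" for j
      using that by (intro monotone_onD[OF antimono]) auto
    then have "(\<Sum>j\<in>{a<..c}. \<bar>f j - f (j - 1)\<bar>) = (\<Sum>j\<in>{a<..c}. f (j - 1) - f j)"
      by (intro sum.cong refl) (simp add: abs_of_nonpos)
    also have "\<dots> = f a - f c"
      using telescope by (simp add: sum_subtractf)
    moreover have "f c \<le> f a"
      using assms(1) by (intro monotone_onD[OF antimono]) auto
    ultimately show ?thesis
      by simp
  qed
qed

lemma sum_weighted_abs_diff_le_Max:
  fixes f \<mu> :: "nat \<Rightarrow> 'a::linordered_idom"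
  assumes "a < c" and "mono_on {a..c} f \<or> antimono_on {a..c} f"
  shows "(\<Sum>j\<in>{a<..c}. \<bar>\<mu> j\<bar> * \<bar>f j - f (j - 1)\<bar>)
       \<le> Max {\<bar>\<mu> j\<bar> | j. a < j \<and> j \<le> c} * \<bar>f c - f a\<bar>"
proof -
  define m where "m = Max {\<bar>\<mu> j\<bar> | j. a < j \<and> j \<le> c}"
  have "{\<bar>\<mu> j\<bar> | j. a < j \<and> j \<le> c} = (\<lambda>j. \<bar>\<mu> j\<bar>) ` {a<..c}"
    by auto
  then have "\<bar>\<mu> j\<bar> \<le> m" if "j \<in> {a<..c}" for j
    using that by (simp add: m_def)
  then have "(\<Sum>j\<in>{a<..c}. \<bar>\<mu> j\<bar> * \<bar>f j - f (j - 1)\<bar>)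
           \<le> (\<Sum>j\<in>{a<..c}. m * \<bar>f j - f (j - 1)\<bar>)"
    by (intro sum_mono mult_right_mono) auto
  also have "\<dots> = m * (\<Sum>j\<in>{a<..c}. \<bar>f j - f (j - 1)\<bar>)"
    by (rule sum_distrib_left[symmetric])
  also have "\<dots> = m * \<bar>f c - f a\<bar>"
    using assms by (simp only: sum_abs_diff_monotone_on less_imp_le)
  finally show ?thesis by (simp add: m_def)
qed

lemma sum_atLeastAtMost_blocks:
  fixes g :: "nat \<Rightarrow> 'a::comm_monoid_add"
  shows "(\<Sum>j=1..m*k. g j) = (\<Sum>i=1..m. \<Sum>j\<in>{(i-1)*k<..i*k}. g j)"
proof (induction m)
  case (Suc m)
  have "{1..Suc m * k} = {1..m*k} \<union> {m*k<..Suc m * k}" by auto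
  then have "(\<Sum>j=1..Suc m*k. g j) = (\<Sum>j=1..m*k. g j) + (\<Sum>j\<in>{m*k<..Suc m * k}. g j)"
    by (simp add: sum.union_disjoint ivl_disj_int)
  then show ?case using Suc by simp
qed simp

lemma grid_cell_not_straddling:
  fixes u v B x :: real
  assumes "0 < B" "u * B \<in> \<int>" "v * B \<in> \<int>" "x \<in> \<int>"
  shows "x / B \<le> u \<or> (u \<le> (x - 1) / B \<and> x / B \<le> v) \<or> v \<le> (x - 1) / B"
proof -
  have "y \<le> z \<or> z \<le> y - 1" if "y \<in> \<int>" "z \<in> \<int>" for y z :: real
    using that by (elim Ints_cases) auto
  then have "x \<le> u * B \<or> (u * B \<le> x - 1 \<and> x \<le> v * B) \<or> v * B \<le> x - 1"
    using assms(2-4) by meson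
  with \<open>0 < B\<close> show ?thesis
    by (simp add: divide_le_eq le_divide_eq)
qed

lemma fbm_cov_increment_monotone_on_grid_cell:
  fixes b n i :: nat
  assumes "0 < H" "u \<le> v" "0 < b" "u * real b ^ n \<in> \<int>" "v * real b ^ n \<in> \<int>" "1 \<le> i"
  defines "g \<equiv> \<lambda>j. fbm_cov_increment H u v (real j / real b ^ (n + 1))"
  shows "mono_on {(i-1)*b..i*b} g \<or> antimono_on {(i-1)*b..i*b} g"
proof -
  define s where "s = (real i - 1) / real b ^ n"
  define t where "t = real i / real b ^ n"
  have "t \<le> u \<or> (u \<le> s \<and> t \<le> v) \<or> v \<le> s"
    unfolding s_def t_def using assms(3-5) by (intro grid_cell_not_straddling) auto
  then have cov: "mono_on {s..t} (fbm_cov_increment H u v)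
                \<or> antimono_on {s..t} (fbm_cov_increment H u v)"
    by (rule fbm_cov_increment_monotone[OF assms(1,2)])
  have scale: "mono_on {(i-1)*b..i*b} (\<lambda>j. real j / real b ^ (n + 1))"
    by (auto intro!: monotone_onI divide_right_mono)
  have image: "(\<lambda>j. real j / real b ^ (n + 1)) ` {(i-1)*b..i*b} \<subseteq> {s..t}"
  proof (rule image_subsetI)
    fix j assume "j \<in> {(i-1)*b..i*b}"
    then have "real ((i-1)*b) \<le> real j" "real j \<le> real (i*b)"
      by (simp_all only: atLeastAtMost_iff of_nat_le_iff)
    then have lo: "(real i - 1) * real b \<le> real j" and hi: "real j \<le> real i * real b"
      using assms(6) by (simp_all add: of_nat_diff)
    have s_eq: "s = (real i - 1) * real b / real b ^ (n + 1)"
      and t_eq: "t = real i * real b / real b ^ (n + 1)"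
      using assms(3) by (simp_all add: s_def t_def)
    have "s \<le> real j / real b ^ (n + 1)"
      unfolding s_eq using lo by (rule divide_right_mono) simp
    moreover have "real j / real b ^ (n + 1) \<le> t"
      unfolding t_eq using hi by (rule divide_right_mono) simp
    ultimately show "real j / real b ^ (n + 1) \<in> {s..t}"
      by simp
  qed
  have "g = fbm_cov_increment H u v \<circ> (\<lambda>j. real j / real b ^ (n + 1))"
    by (simp add: g_def comp_def)
  with cov show ?thesis
    using monotone_on_o[OF _ scale image] by blast
qed

theorem lemma3p7:
  fixes M :: "'a measure" and H :: real and W :: "real \<Rightarrow> 'a \<Rightarrow> real"
    and b n :: nat and u v :: real and \<mu> :: "nat \<Rightarrow> real"
  assumes "0 < H" "H < 1"
    and "is_fbm M H W"
    and "b \<ge> 2"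
    and "0 \<le> u" "u \<le> v" "v \<le> 1"
    and "u * real b ^ n \<in> \<int>" "v * real b ^ n \<in> \<int>"
  shows "(\<Sum>j=1..b^(n+1). \<bar>\<mu> j\<bar> *
            \<bar>integral\<^sup>L M (\<lambda>\<omega>. (W (real j / real b ^ (n+1)) \<omega> - W ((real j - 1) / real b ^ (n+1)) \<omega>)
                                * (W v \<omega> - W u \<omega>))\<bar>)
         \<le> (\<Sum>i=1..b^n. Max {\<bar>\<mu> j\<bar> | j. (i - 1) * b < j \<and> j \<le> i * b} *
            \<bar>integral\<^sup>L M (\<lambda>\<omega>. (W (real i / real b ^ n) \<omega> - W ((real i - 1) / real b ^ n) \<omega>)
                                * (W v \<omega> - W u \<omega>))\<bar>)"
proof -
  define f where "f j = fbm_cov_increment H u v (real j / real b ^ (n + 1))" for j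
  have fine: "(\<integral>\<omega>. (W (real j / real b ^ (n+1)) \<omega> - W ((real j - 1) / real b ^ (n+1)) \<omega>)
                 * (W v \<omega> - W u \<omega>) \<partial>M) = f j - f (j - 1)" if "1 \<le> j" for j
    using that assms by (simp add: integral_fbm_increments f_def of_nat_diff)
  have coarse: "(\<integral>\<omega>. (W (real i / real b ^ n) \<omega> - W ((real i - 1) / real b ^ n) \<omega>)
                 * (W v \<omega> - W u \<omega>) \<partial>M) = f (i * b) - f ((i - 1) * b)" if "1 \<le> i" for i
    using that assms by (simp add: integral_fbm_increments f_def of_nat_diff)
  have mono: "mono_on {(i-1)*b..i*b} f \<or> antimono_on {(i-1)*b..i*b} f" if "1 \<le> i" for i
    using assms that unfolding f_def by (intro fbm_cov_increment_monotone_on_grid_cell) auto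
  have "(\<Sum>j=1..b^(n+1). \<bar>\<mu> j\<bar> *
            \<bar>integral\<^sup>L M (\<lambda>\<omega>. (W (real j / real b ^ (n+1)) \<omega> - W ((real j - 1) / real b ^ (n+1)) \<omega>)
                                * (W v \<omega> - W u \<omega>))\<bar>)
      = (\<Sum>j=1..b^n*b. \<bar>\<mu> j\<bar> * \<bar>f j - f (j - 1)\<bar>)"
    using fine by (intro sum.cong) (auto simp: mult.commute)
  also have "\<dots> = (\<Sum>i=1..b^n. \<Sum>j\<in>{(i-1)*b<..i*b}. \<bar>\<mu> j\<bar> * \<bar>f j - f (j - 1)\<bar>)"
    by (rule sum_atLeastAtMost_blocks)
  also have "\<dots> \<le> (\<Sum>i=1..b^n. Max {\<bar>\<mu> j\<bar> | j. (i - 1) * b < j \<and> j \<le> i * b}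
                                * \<bar>f (i * b) - f ((i - 1) * b)\<bar>)"
    using assms(4) by (intro sum_mono sum_weighted_abs_diff_le_Max mono) auto
  also have "\<dots> = (\<Sum>i=1..b^n. Max {\<bar>\<mu> j\<bar> | j. (i - 1) * b < j \<and> j \<le> i * b} *
            \<bar>integral\<^sup>L M (\<lambda>\<omega>. (W (real i / real b ^ n) \<omega> - W ((real i - 1) / real b ^ n) \<omega>)
                                * (W v \<omega> - W u \<omega>))\<bar>)"
    by (simp add: coarse)
  finally show ?thesis .
qed
end
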